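(* Let $T\in\mathcal{B}\subseteq B(\mathcal{F})$ be a band-limited operator such that either $[T,R_j^*]\in\mathcal{S}$ for all $1\le j\le d$, or $[T,R_j]\in\mathcal{S}$ for all $1\le j\le d$. Then $T\in\mathcal{C}=C^*(L_1,\ldots,L_d)$.
   Context: $d\ge2$; $\xi_1,\ldots,\xi_d$ is the standard orthonormal basis of $\mathbb{C}^d$. $\mathcal{F}=\bigoplus_{n\ge0}\mathcal{F}_n$ is the full Fock space, $\mathcal{F}_0=\mathbb{C}\Omega$, $\mathcal{F}_n=(\mathbb{C}^d)^{\otimes n}$ with the usual inner product. $L_j,R_j$ are the left and right creation operators: $L_j\eta=\xi_j\otimes\eta$, $R_j\eta=\eta\otimes\xi_j$ (with $L_j\Omega=R_j\Omega=\xi_j$). An operator $T\in B(\mathcal{F})$ is band-limited if there is $b\ge0$ with $T(\mathcal{F}_n)\subseteq\bigoplus_{m\ge0,|m-n|\le b}\mathcal{F}_m$ for all $n$; $\mathcal{B}$ is the set of band-limited operators. A band-limited $T$ is summable if $\sum_{n\ge0}\|T|_{\mathcal{F}_n}\|<\infty$, where $T|_{\mathcal{F}_n}$ is the restriction of $T$ to $\mathcal{F}_n$; $\mathcal{S}$ is the set of summable band-limited operators. *)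

theory Defs
  imports "HOL-Analysis.Analysis"
begin

text \<open>Full Fock space over C^d, realised as l2 over the set of words (lists) with
letters in {0..<d}; the word w corresponds to the basis vector xi_{w1} (x) ... (x) xi_{wn},
the empty word to Omega.  Bounded operators are represented by their matrices
M w v = <T e_v, e_w>, vanishing outside words x words.\<close>

definition words :: "nat \<Rightarrow> nat list set" where
  "words d = {w. \<forall>i\<in>set w. i < d}"

type_synonym mat = "nat list \<Rightarrow> nat list \<Rightarrow> complex"

definition is_mat :: "nat \<Rightarrow> mat \<Rightarrow> bool" where
  "is_mat d M \<longleftrightarrow> (\<forall>w v. (w \<notin> words d \<or> v \<notin> words d) \<longrightarrow> M w v = 0)"

definition op_bound :: "nat \<Rightarrow> mat \<Rightarrow> real \<Rightarrow> bool" where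
  "op_bound d M C \<longleftrightarrow> C \<ge> 0 \<and>
     (\<forall>A B (x :: nat list \<Rightarrow> complex). finite A \<longrightarrow> finite B \<longrightarrow> A \<subseteq> words d \<longrightarrow> B \<subseteq> words d \<longrightarrow>
        (\<Sum>w\<in>B. (cmod (\<Sum>v\<in>A. M w v * x v))\<^sup>2) \<le> C\<^sup>2 * (\<Sum>v\<in>A. (cmod (x v))\<^sup>2))"

definition bounded_op :: "nat \<Rightarrow> mat \<Rightarrow> bool" where
  "bounded_op d M \<longleftrightarrow> is_mat d M \<and> (\<exists>C. op_bound d M C)"

definition opnorm :: "nat \<Rightarrow> mat \<Rightarrow> real" where
  "opnorm d M = Inf {C. op_bound d M C}"

definition mat_mult :: "nat \<Rightarrow> mat \<Rightarrow> mat \<Rightarrow> mat" where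
  "mat_mult d M N = (\<lambda>w v. infsum (\<lambda>u. M w u * N u v) (words d))"

definition adj :: "mat \<Rightarrow> mat" where
  "adj M = (\<lambda>w v. cnj (M v w))"

definition commutator :: "nat \<Rightarrow> mat \<Rightarrow> mat \<Rightarrow> mat" where
  "commutator d M N = (\<lambda>w v. mat_mult d M N w v - mat_mult d N M w v)"

text \<open>Left / right creation operators (letters indexed 0..d-1 instead of 1..d):
L_j e_v = e_(j # v),  R_j e_v = e_(v @ [j]).\<close>
definition Lcr :: "nat \<Rightarrow> nat \<Rightarrow> mat" where
  "Lcr d j = (\<lambda>w v. if v \<in> words d \<and> w = j # v then 1 else 0)"

definition Rcr :: "nat \<Rightarrow> nat \<Rightarrow> mat" where
  "Rcr d j = (\<lambda>w v. if v \<in> words d \<and> w = v @ [j] then 1 else 0)"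

definition band_limited :: "nat \<Rightarrow> mat \<Rightarrow> bool" where
  "band_limited d M \<longleftrightarrow> bounded_op d M \<and>
     (\<exists>b::nat. \<forall>w v. M w v \<noteq> 0 \<longrightarrow> length w \<le> length v + b \<and> length v \<le> length w + b)"

definition restr :: "nat \<Rightarrow> mat \<Rightarrow> mat" where
  "restr n M = (\<lambda>w v. if length v = n then M w v else 0)"

definition summable_op :: "nat \<Rightarrow> mat \<Rightarrow> bool" where
  "summable_op d M \<longleftrightarrow> band_limited d M \<and> summable (\<lambda>n. opnorm d (restr n M))"

inductive_set star_alg_L :: "nat \<Rightarrow> mat set" for d where
  gen: "j < d \<Longrightarrow> Lcr d j \<in> star_alg_L d"
| add: "M \<in> star_alg_L d \<Longrightarrow> N \<in> star_alg_L d \<Longrightarrow> (\<lambda>w v. M w v + N w v) \<in> star_alg_L d"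
| scal: "M \<in> star_alg_L d \<Longrightarrow> (\<lambda>w v. c * M w v) \<in> star_alg_L d"
| mult: "M \<in> star_alg_L d \<Longrightarrow> N \<in> star_alg_L d \<Longrightarrow> mat_mult d M N \<in> star_alg_L d"
| adjoint: "M \<in> star_alg_L d \<Longrightarrow> adj M \<in> star_alg_L d"

definition cstar_L :: "nat \<Rightarrow> mat set" where
  "cstar_L d = {T. bounded_op d T \<and>
     (\<forall>e>0. \<exists>S\<in>star_alg_L d. opnorm d (\<lambda>w v. T w v - S w v) < e)}"

end

theory Submission
  imports Defs
begin

text \<open>
  For large N, let S_N agree with T on inputs of length < N and act as
  T|F_N \<otimes> I on longer inputs, i.e. e_(v t) \<mapsto> (T e_v) \<otimes> e_t for |v| = N. Since
  I - \<Sum>_j L_j L_j^* is the projection onto \<Omega>, S_N is a finite combination of the matrix units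
  L_u (I - \<Sum>_j L_j L_j^*) L_v^* and of the operators L_u L_v^*, so S_N lies in the *-algebra
  generated by the L_j. On F_n the error T - S_N telescopes into \<Sum>_(N \<le> k < n) D_k \<otimes> I with
  D_k = (T - T|F_k \<otimes> I)|F_(k+1). Splitting off the last letter j of the input turns D_k into
  [T, R_j] on F_k; splitting off the last letter of the output (nonempty once k \<ge> b, the band width
  of T) turns it into -[T, R_j^*] on F_(k+1). So the level norms of T - S_N are bounded by the tail of a
  convergent series, and as T - S_N still has band width b, its norm is at most sqrt(2b+1) times
  that tail.
\<close>

lemma append_in_words_iff[simp]: "a @ b \<in> words d \<longleftrightarrow> a \<in> words d \<and> b \<in> words d"
  unfolding words_def by auto

lemma words_take: "w \<in> words d \<Longrightarrow> take n w \<in> words d"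
  unfolding words_def by (auto dest: in_set_takeD)

lemma words_drop: "w \<in> words d \<Longrightarrow> drop n w \<in> words d"
  unfolding words_def by (auto dest: in_set_dropD)

lemma words_butlast: "w \<in> words d \<Longrightarrow> butlast w \<in> words d"
  unfolding words_def by (auto dest: in_set_butlastD)

lemma last_less_if_words: "v \<in> words d \<Longrightarrow> v \<noteq> [] \<Longrightarrow> last v < d"
  unfolding words_def by auto

lemma finite_words_le: "finite {u \<in> words d. length u \<le> n}"
proof -
  have "{u \<in> words d. length u \<le> n} = {xs. set xs \<subseteq> {..<d} \<and> length xs \<le> n}"
    unfolding words_def by auto
  thus ?thesis using finite_lists_length_le[of "{..<d}" n] by simp
qed

section \<open>Norms of finite sections\<close>

definition mat_apply :: "mat \<Rightarrow> (nat list \<Rightarrow> complex) \<Rightarrow> nat list set \<Rightarrow> nat list \<Rightarrow> complex" where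
  "mat_apply M x A w = (\<Sum>v\<in>A. M w v * x v)"

definition l2_on :: "(nat list \<Rightarrow> complex) \<Rightarrow> nat list set \<Rightarrow> real" where
  "l2_on x A = L2_set (\<lambda>v. cmod (x v)) A"

lemma l2_on_nonneg[simp]: "l2_on x A \<ge> 0" unfolding l2_on_def by simp

lemma l2_on_sq: "(l2_on f B)\<^sup>2 = (\<Sum>w\<in>B. (cmod (f w))\<^sup>2)"
  unfolding l2_on_def L2_set_def by (simp add: sum_nonneg)

lemma l2_on_cong: "(\<And>w. w \<in> B \<Longrightarrow> cmod (f w) = cmod (g w)) \<Longrightarrow> l2_on f B = l2_on g B"
  unfolding l2_on_def by (rule L2_set_cong) auto

lemma l2_on_add: "l2_on (\<lambda>w. f w + g w) B \<le> l2_on f B + l2_on g B"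
proof -
  have "l2_on (\<lambda>w. f w + g w) B \<le> L2_set (\<lambda>w. cmod (f w) + cmod (g w)) B"
    unfolding l2_on_def by (rule L2_set_mono) (auto simp: norm_triangle_ineq)
  also have "\<dots> \<le> l2_on f B + l2_on g B" unfolding l2_on_def by (rule L2_set_triangle_ineq)
  finally show ?thesis .
qed

lemma l2_on_sum: "finite I \<Longrightarrow> l2_on (\<lambda>w. \<Sum>i\<in>I. f i w) B \<le> (\<Sum>i\<in>I. l2_on (f i) B)"
proof (induction I rule: finite_induct)
  case empty then show ?case by (simp add: l2_on_def L2_set_0')
next
  case (insert a I)
  have "l2_on (\<lambda>w. \<Sum>i\<in>insert a I. f i w) B = l2_on (\<lambda>w. f a w + (\<Sum>i\<in>I. f i w)) B"
    using insert by simp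
  also have "\<dots> \<le> l2_on (f a) B + l2_on (\<lambda>w. \<Sum>i\<in>I. f i w) B" by (rule l2_on_add)
  also have "\<dots> \<le> l2_on (f a) B + (\<Sum>i\<in>I. l2_on (f i) B)" using insert by simp
  finally show ?case using insert by simp
qed

lemma l2_on_scal: "l2_on (\<lambda>w. c * f w) B = cmod c * l2_on f B"
  unfolding l2_on_def by (simp add: norm_mult L2_set_right_distrib)

lemma l2_on_subset: assumes "finite A" "A' \<subseteq> A" shows "l2_on x A' \<le> l2_on x A"
  unfolding l2_on_def L2_set_def
  by (rule real_sqrt_le_mono, rule sum_mono2) (use assms in auto)

lemma l2_on_reindex: assumes "inj_on g A'" shows "l2_on (\<lambda>a. x (g a)) A' = l2_on x (g ` A')"
  unfolding l2_on_def L2_set_def using assms by (simp add: sum.reindex)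

lemma l2_on_inj_le: assumes "finite A" "inj_on g A'" "g ` A' \<subseteq> A"
  shows "l2_on (\<lambda>a. x (g a)) A' \<le> l2_on x A"
  using l2_on_reindex[OF assms(2), of x] l2_on_subset[OF assms(1) assms(3)] by simp

lemma l2_on_if: "finite B \<Longrightarrow> l2_on (\<lambda>w. if P w then g w else 0) B = l2_on g {w\<in>B. P w}"
  unfolding l2_on_def L2_set_def
  by (simp add: if_distrib[of cmod] if_distrib[of "\<lambda>z. z\<^sup>2"] sum.inter_filter[symmetric] cong: if_cong)

lemma mat_apply_cong: "(\<And>v. v \<in> A \<Longrightarrow> M w v = N w v) \<Longrightarrow> mat_apply M x A w = mat_apply N x A w"
  unfolding mat_apply_def by (rule sum.cong) auto

lemma mat_apply_sum: "finite I \<Longrightarrow> mat_apply (\<lambda>w v. \<Sum>i\<in>I. M i w v) x A w = (\<Sum>i\<in>I. mat_apply (M i) x A w)"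
  unfolding mat_apply_def sum_distrib_right by (rule sum.swap)

lemma mat_apply_scal: "mat_apply (\<lambda>w v. c * M w v) x A w = c * mat_apply M x A w"
  unfolding mat_apply_def by (simp add: sum_distrib_left mult.assoc)

lemma le_square_mult_iff_sqrt: assumes "C \<ge> 0" "P \<ge> 0" "Q \<ge> 0"
  shows "(Q \<le> C\<^sup>2 * P) \<longleftrightarrow> sqrt Q \<le> C * sqrt P"
proof -
  have "C * sqrt P = sqrt (C\<^sup>2 * P)" using assms by (simp add: real_sqrt_mult)
  thus ?thesis using assms by simp
qed

lemma op_bound_iff_l2_on: "op_bound d M C \<longleftrightarrow> C \<ge> 0 \<and>
     (\<forall>A B x. finite A \<longrightarrow> finite B \<longrightarrow> A \<subseteq> words d \<longrightarrow> B \<subseteq> words d \<longrightarrow>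
        l2_on (mat_apply M x A) B \<le> C * l2_on x A)"
proof -
  have "\<And>A B x. C \<ge> 0 \<Longrightarrow> ((\<Sum>w\<in>B. (cmod (\<Sum>v\<in>A. M w v * x v))\<^sup>2) \<le> C\<^sup>2 * (\<Sum>v\<in>A. (cmod (x v))\<^sup>2))
     \<longleftrightarrow> l2_on (mat_apply M x A) B \<le> C * l2_on x A"
    unfolding l2_on_def mat_apply_def L2_set_def
    by (intro le_square_mult_iff_sqrt) (simp_all add: sum_nonneg)
  note key = this
  show ?thesis
  proof (cases "C \<ge> 0")
    case True
    show ?thesis unfolding op_bound_def by (simp only: key[OF True] True simp_thms)
  next
    case False then show ?thesis unfolding op_bound_def by simp
  qed
qed

lemma op_boundD:
  "op_bound d M C \<Longrightarrow> finite A \<Longrightarrow> finite B \<Longrightarrow> A \<subseteq> words d \<Longrightarrow> B \<subseteq> words d \<Longrightarrow>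
   l2_on (mat_apply M x A) B \<le> C * l2_on x A"
  unfolding op_bound_iff_l2_on by blast

lemma op_bound_nonneg: "op_bound d M C \<Longrightarrow> C \<ge> 0" unfolding op_bound_def by simp

lemma opnorm_le: assumes "op_bound d M C" shows "opnorm d M \<le> C"
  unfolding opnorm_def
  by (rule cInf_lower) (use assms op_bound_nonneg in \<open>auto simp: bdd_below_def\<close>)

lemma op_bound_opnorm: assumes "bounded_op d M" shows "op_bound d M (opnorm d M)"
proof -
  let ?S = "{C. op_bound d M C}"
  have ne: "?S \<noteq> {}" using assms unfolding bounded_op_def by auto
  have nn: "opnorm d M \<ge> 0" unfolding opnorm_def
    by (rule cInf_greatest[OF ne]) (auto dest: op_bound_nonneg)
  show ?thesis unfolding op_bound_iff_l2_on
  proof (intro conjI allI impI nn)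
    fix A B x assume h: "finite A" "finite B" "A \<subseteq> words d" "B \<subseteq> words d"
    have all: "\<And>C. C \<in> ?S \<Longrightarrow> l2_on (mat_apply M x A) B \<le> C * l2_on x A"
      using h by (auto intro: op_boundD)
    show "l2_on (mat_apply M x A) B \<le> opnorm d M * l2_on x A"
    proof (cases "l2_on x A = 0")
      case True
      from ne obtain C where "C \<in> ?S" by auto
      with all True show ?thesis by force
    next
      case False
      hence pos: "l2_on x A > 0" using l2_on_nonneg[of x A] by linarith
      have "l2_on (mat_apply M x A) B / l2_on x A \<le> opnorm d M" unfolding opnorm_def
      proof (rule cInf_greatest[OF ne])
        fix C assume "C \<in> ?S"
        thus "l2_on (mat_apply M x A) B / l2_on x A \<le> C" using all pos by (simp add: divide_le_eq)
      qed
      thus ?thesis using pos by (simp add: divide_le_eq)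
    qed
  qed
qed

lemma opnorm_nonneg: "bounded_op d M \<Longrightarrow> opnorm d M \<ge> 0"
  using op_bound_nonneg op_bound_opnorm by blast

lemma bounded_op_restr: assumes "bounded_op d M" shows "bounded_op d (restr n M)"
proof -
  obtain C where C: "op_bound d M C" using assms unfolding bounded_op_def by auto
  have "op_bound d (restr n M) C" unfolding op_bound_iff_l2_on
  proof (intro conjI allI impI)
    show "C \<ge> 0" using C op_bound_nonneg by auto
    fix A B x assume h: "finite A" "finite B" "A \<subseteq> words d" "B \<subseteq> words d"
    let ?A = "{v\<in>A. length v = n}"
    have "mat_apply (restr n M) x A = mat_apply M x ?A"
      unfolding mat_apply_def restr_def by (rule ext) (simp add: sum.inter_filter[symmetric] h(1) if_distrib[of "\<lambda>z. z * _"] cong: if_cong)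
    hence "l2_on (mat_apply (restr n M) x A) B = l2_on (mat_apply M x ?A) B" by simp
    also have "\<dots> \<le> C * l2_on x ?A" by (rule op_boundD[OF C]) (use h in auto)
    also have "\<dots> \<le> C * l2_on x A"
      using l2_on_subset[OF h(1), of ?A x] \<open>C \<ge> 0\<close> by (simp add: mult_left_mono)
    finally show "l2_on (mat_apply (restr n M) x A) B \<le> C * l2_on x A" .
  qed
  moreover have "is_mat d (restr n M)" using assms unfolding bounded_op_def is_mat_def restr_def by auto
  ultimately show ?thesis unfolding bounded_op_def by auto
qed

section \<open>Level bounds and band-limited operators\<close>

definition level_bound :: "nat \<Rightarrow> mat \<Rightarrow> nat \<Rightarrow> real \<Rightarrow> bool" where
  "level_bound d M n c \<longleftrightarrow> c \<ge> 0 \<and>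
     (\<forall>A B x. finite A \<longrightarrow> finite B \<longrightarrow> A \<subseteq> words d \<longrightarrow> B \<subseteq> words d \<longrightarrow>
        (\<forall>v\<in>A. length v = n) \<longrightarrow>
        l2_on (mat_apply M x A) B \<le> c * l2_on x A)"

lemma level_boundD:
  "level_bound d M n C \<Longrightarrow> finite A \<Longrightarrow> finite B \<Longrightarrow> A \<subseteq> words d \<Longrightarrow> B \<subseteq> words d \<Longrightarrow>
   (\<And>v. v \<in> A \<Longrightarrow> length v = n) \<Longrightarrow> l2_on (mat_apply M x A) B \<le> C * l2_on x A"
  unfolding level_bound_def by blast

lemma op_bound_imp_level_bound: "op_bound d M C \<Longrightarrow> level_bound d M n C"
  unfolding op_bound_iff_l2_on level_bound_def by blast

lemma level_bound_cong:
  assumes "level_bound d M n c" "\<And>w v. w \<in> words d \<Longrightarrow> v \<in> words d \<Longrightarrow> length v = n \<Longrightarrow> M w v = N w v"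
  shows "level_bound d N n c"
  unfolding level_bound_def
proof (intro conjI allI impI)
  show "c \<ge> 0" using assms(1) unfolding level_bound_def by auto
  fix A B x assume h: "finite A" "finite B" "A \<subseteq> words d" "B \<subseteq> words d" "\<forall>v\<in>A. length v = n"
  have "l2_on (mat_apply N x A) B = l2_on (mat_apply M x A) B"
  proof (rule l2_on_cong)
    fix w assume "w \<in> B"
    hence "mat_apply N x A w = mat_apply M x A w" using h by (intro mat_apply_cong) (auto simp: subset_iff assms(2))
    thus "cmod (mat_apply N x A w) = cmod (mat_apply M x A w)" by simp
  qed
  thus "l2_on (mat_apply N x A) B \<le> c * l2_on x A" using assms(1) h unfolding level_bound_def by auto
qed

lemma level_bound_restr: assumes "bounded_op d M" shows "level_bound d M n (opnorm d (restr n M))"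
proof -
  have "level_bound d (restr n M) n (opnorm d (restr n M))"
    by (rule op_bound_imp_level_bound, rule op_bound_opnorm, rule bounded_op_restr[OF assms])
  thus ?thesis by (rule level_bound_cong) (simp add: restr_def)
qed

lemma level_bound_mono: "level_bound d M n c \<Longrightarrow> c \<le> c' \<Longrightarrow> level_bound d M n c'"
  unfolding level_bound_def by (meson l2_on_nonneg mult_right_mono order_trans)

lemma level_bound_sum:
  assumes "finite I" "\<And>i. i \<in> I \<Longrightarrow> level_bound d (M i) n (c i)"
  shows "level_bound d (\<lambda>w v. \<Sum>i\<in>I. M i w v) n (\<Sum>i\<in>I. c i)"
  unfolding level_bound_def
proof (intro conjI allI impI)
  show "0 \<le> sum c I" using assms unfolding level_bound_def by (simp add: sum_nonneg)
  fix A B x assume h: "finite A" "finite B" "A \<subseteq> words d" "B \<subseteq> words d" "\<forall>v\<in>A. length v = n"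
  have "mat_apply (\<lambda>w v. \<Sum>i\<in>I. M i w v) x A = (\<lambda>w. \<Sum>i\<in>I. mat_apply (M i) x A w)"
    using assms(1) by (intro ext) (rule mat_apply_sum)
  hence "l2_on (mat_apply (\<lambda>w v. \<Sum>i\<in>I. M i w v) x A) B = l2_on (\<lambda>w. \<Sum>i\<in>I. mat_apply (M i) x A w) B"
    by simp
  also have "\<dots> \<le> (\<Sum>i\<in>I. l2_on (mat_apply (M i) x A) B)" using assms(1) by (rule l2_on_sum)
  also have "\<dots> \<le> (\<Sum>i\<in>I. c i * l2_on x A)"
    using assms(2) h by (intro sum_mono level_boundD) auto
  finally show "l2_on (mat_apply (\<lambda>w v. \<Sum>i\<in>I. M i w v) x A) B \<le> sum c I * l2_on x A"
    by (simp add: sum_distrib_right)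
qed

lemma level_bound_scal:
  assumes "level_bound d M n c" shows "level_bound d (\<lambda>w v. a * M w v) n (cmod a * c)"
  unfolding level_bound_def
proof (intro conjI allI impI)
  show "0 \<le> cmod a * c" using assms unfolding level_bound_def by simp
  fix A B x assume h: "finite A" "finite B" "A \<subseteq> words d" "B \<subseteq> words d" "\<forall>v\<in>A. length v = n"
  have "mat_apply (\<lambda>w v. a * M w v) x A = (\<lambda>w. a * mat_apply M x A w)" by (rule ext) (rule mat_apply_scal)
  hence "l2_on (mat_apply (\<lambda>w v. a * M w v) x A) B = cmod a * l2_on (mat_apply M x A) B"
    by (simp add: l2_on_scal)
  also have "\<dots> \<le> cmod a * (c * l2_on x A)"
    using assms h unfolding level_bound_def by (simp add: mult_left_mono)
  finally show "l2_on (mat_apply (\<lambda>w v. a * M w v) x A) B \<le> cmod a * c * l2_on x A" by simp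
qed

lemma level_bound_squares:
  assumes "level_bound d M n c" "finite A" "finite B" "A \<subseteq> words d" "B \<subseteq> words d" "\<And>v. v \<in> A \<Longrightarrow> length v = n"
  shows "(\<Sum>w\<in>B. (cmod (mat_apply M x A w))\<^sup>2) \<le> c\<^sup>2 * (\<Sum>v\<in>A. (cmod (x v))\<^sup>2)"
proof -
  have "l2_on (mat_apply M x A) B \<le> c * l2_on x A" by (rule level_boundD[OF assms])
  hence "(l2_on (mat_apply M x A) B)\<^sup>2 \<le> (c * l2_on x A)\<^sup>2" by (rule power_mono) simp
  thus ?thesis by (simp add: l2_on_sq power_mult_distrib)
qed

lemma level_bound_of_squares:
  assumes "c \<ge> 0" "\<And>A B x. finite A \<Longrightarrow> finite B \<Longrightarrow> A \<subseteq> words d \<Longrightarrow> B \<subseteq> words d \<Longrightarrow>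
      (\<And>v. v \<in> A \<Longrightarrow> length v = n) \<Longrightarrow>
     (\<Sum>w\<in>B. (cmod (mat_apply M x A w))\<^sup>2) \<le> c\<^sup>2 * (\<Sum>v\<in>A. (cmod (x v))\<^sup>2)"
  shows "level_bound d M n c"
  unfolding level_bound_def
proof (intro conjI allI impI assms(1))
  fix A B x assume h: "finite A" "finite B" "A \<subseteq> words d" "B \<subseteq> words d" "\<forall>v\<in>A. length v = n"
  have "(\<Sum>w\<in>B. (cmod (mat_apply M x A w))\<^sup>2) \<le> c\<^sup>2 * (\<Sum>v\<in>A. (cmod (x v))\<^sup>2)" using h assms(2) by auto
  thus "l2_on (mat_apply M x A) B \<le> c * l2_on x A"
    unfolding l2_on_def L2_set_def by (subst le_square_mult_iff_sqrt[symmetric]) (auto intro: sum_nonneg assms(1))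
qed

lemma sum_abs_squared_le_card: fixes f :: "'a \<Rightarrow> real"
  shows "(\<Sum>i\<in>I. \<bar>f i\<bar>)\<^sup>2 \<le> real (card I) * (\<Sum>i\<in>I. (f i)\<^sup>2)"
proof -
  have "(\<Sum>i\<in>I. \<bar>f i\<bar> * \<bar>(\<lambda>_. 1::real) i\<bar>) \<le> L2_set f I * L2_set (\<lambda>_. 1) I"
    by (rule L2_set_mult_ineq)
  hence a: "(\<Sum>i\<in>I. \<bar>f i\<bar>) \<le> L2_set f I * sqrt (real (card I))" by (simp add: L2_set_constant)
  have "(\<Sum>i\<in>I. \<bar>f i\<bar>)\<^sup>2 \<le> (L2_set f I * sqrt (real (card I)))\<^sup>2"
    by (rule power_mono[OF a]) (simp add: sum_nonneg)
  also have "\<dots> = (L2_set f I)\<^sup>2 * real (card I)" by (simp add: power_mult_distrib)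
  also have "(L2_set f I)\<^sup>2 = (\<Sum>i\<in>I. (f i)\<^sup>2)" unfolding L2_set_def by (simp add: sum_nonneg)
  finally show ?thesis by (simp add: mult.commute)
qed

lemma norm_sum_squared_le_card: "(cmod (\<Sum>i\<in>I. z i))\<^sup>2 \<le> real (card I) * (\<Sum>i\<in>I. (cmod (z i))\<^sup>2)"
proof -
  have "cmod (\<Sum>i\<in>I. z i) \<le> (\<Sum>i\<in>I. \<bar>cmod (z i)\<bar>)" by (simp add: norm_sum)
  hence "(cmod (\<Sum>i\<in>I. z i))\<^sup>2 \<le> (\<Sum>i\<in>I. \<bar>cmod (z i)\<bar>)\<^sup>2" by (rule power_mono) simp
  also have "\<dots> \<le> real (card I) * (\<Sum>i\<in>I. (cmod (z i))\<^sup>2)" using sum_abs_squared_le_card[of "\<lambda>i. cmod (z i)" I] by simp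
  finally show ?thesis .
qed

lemma norm_apply_squared_le_levels:
  assumes "finite A"
    and band: "\<And>v. v \<in> A \<Longrightarrow> M w v \<noteq> 0 \<Longrightarrow> length w \<le> length v + b \<and> length v \<le> length w + b"
  shows "(cmod (mat_apply M x A w))\<^sup>2
    \<le> real (2*b+1) * (\<Sum>n\<in>length ` A. (cmod (mat_apply M x {v\<in>A. length v = n} w))\<^sup>2)"
proof -
  let ?L = "length ` A" and ?An = "\<lambda>n. {v\<in>A. length v = n}"
  define I where "I = {n\<in>?L. n \<le> length w + b \<and> length w \<le> n + b}"
  have fL: "finite ?L" using assms(1) by simp
  have "mat_apply M x A w = (\<Sum>n\<in>?L. mat_apply M x (?An n) w)"
    unfolding mat_apply_def by (rule sum.group[symmetric]) (use assms(1) in auto)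
  also have "\<dots> = (\<Sum>n\<in>I. mat_apply M x (?An n) w)"
  proof (rule sum.mono_neutral_right[OF fL])
    show "\<forall>n\<in>?L - I. mat_apply M x (?An n) w = 0"
    proof
      fix n assume "n \<in> ?L - I"
      hence "\<And>v. v \<in> ?An n \<Longrightarrow> M w v = 0" unfolding I_def using band by fastforce
      thus "mat_apply M x (?An n) w = 0" unfolding mat_apply_def by simp
    qed
  qed (auto simp: I_def)
  finally have split: "mat_apply M x A w = (\<Sum>n\<in>I. mat_apply M x (?An n) w)" .
  have "card I \<le> card {length w - b .. length w + b}" by (intro card_mono) (auto simp: I_def)
  hence cardI: "real (card I) \<le> real (2*b+1)" by simp
  have "(cmod (mat_apply M x A w))\<^sup>2 \<le> real (card I) * (\<Sum>n\<in>I. (cmod (mat_apply M x (?An n) w))\<^sup>2)"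
    unfolding split by (rule norm_sum_squared_le_card)
  also have "\<dots> \<le> real (2*b+1) * (\<Sum>n\<in>I. (cmod (mat_apply M x (?An n) w))\<^sup>2)"
    by (rule mult_right_mono[OF cardI]) (simp add: sum_nonneg)
  also have "(\<Sum>n\<in>I. (cmod (mat_apply M x (?An n) w))\<^sup>2) \<le> (\<Sum>n\<in>?L. (cmod (mat_apply M x (?An n) w))\<^sup>2)"
    by (rule sum_mono2[OF fL]) (auto simp: I_def)
  finally show ?thesis by (simp add: mult_left_mono)
qed

text \<open>Each output coordinate of a band-limited operator sees at most 2b+1 input levels.\<close>
lemma op_bound_of_band_level_bound:
  assumes band: "\<And>w v. w \<in> words d \<Longrightarrow> v \<in> words d \<Longrightarrow> M w v \<noteq> 0 \<Longrightarrow>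
      length w \<le> length v + b \<and> length v \<le> length w + b"
    and lvl: "\<And>n. level_bound d M n c" and c: "c \<ge> 0"
  shows "op_bound d M (sqrt (real (2*b+1)) * c)"
  unfolding op_bound_def
proof (intro conjI allI impI)
  show "sqrt (real (2*b+1)) * c \<ge> 0" using c by simp
  fix A B and x :: "nat list \<Rightarrow> complex"
  assume h: "finite A" "finite B" "A \<subseteq> words d" "B \<subseteq> words d"
  let ?L = "length ` A" and ?An = "\<lambda>n. {v\<in>A. length v = n}"
  have "(\<Sum>w\<in>B. (cmod (mat_apply M x A w))\<^sup>2)
      \<le> (\<Sum>w\<in>B. real (2*b+1) * (\<Sum>n\<in>?L. (cmod (mat_apply M x (?An n) w))\<^sup>2))"
    using h by (intro sum_mono norm_apply_squared_le_levels band) auto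
  also have "\<dots> = real (2*b+1) * (\<Sum>n\<in>?L. \<Sum>w\<in>B. (cmod (mat_apply M x (?An n) w))\<^sup>2)"
    by (simp add: sum_distrib_left sum.swap[of _ B ?L])
  also have "\<dots> \<le> real (2*b+1) * (\<Sum>n\<in>?L. c\<^sup>2 * (\<Sum>v\<in>?An n. (cmod (x v))\<^sup>2))"
    using h by (intro mult_left_mono sum_mono level_bound_squares[OF lvl]) auto
  also have "(\<Sum>n\<in>?L. c\<^sup>2 * (\<Sum>v\<in>?An n. (cmod (x v))\<^sup>2)) = c\<^sup>2 * (\<Sum>v\<in>A. (cmod (x v))\<^sup>2)"
    unfolding sum_distrib_left[symmetric] by (subst sum.group) (use h in auto)
  finally show "(\<Sum>w\<in>B. (cmod (\<Sum>v\<in>A. M w v * x v))\<^sup>2) \<le> (sqrt (real (2*b+1)) * c)\<^sup>2 * (\<Sum>v\<in>A. (cmod (x v))\<^sup>2)"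
    unfolding mat_apply_def by (simp add: power_mult_distrib)
qed

section \<open>Ampliation\<close>

text \<open>ampliate m D acts as D \<otimes> I on F_k \<otimes> F_m = F_(k+m): the last m letters of a word pass through unchanged.\<close>
definition ampliate :: "nat \<Rightarrow> mat \<Rightarrow> mat" where
  "ampliate m D = (\<lambda>w v. if m \<le> length w \<and> m \<le> length v \<and> drop (length w - m) w = drop (length v - m) v
      then D (take (length w - m) w) (take (length v - m) v) else 0)"

lemma bij_betw_append_suffix:
  "bij_betw (\<lambda>a. a @ s) (take k ` {v\<in>A. drop k v = s}) {v\<in>A. drop k v = s}"
proof -
  have "v = take k v @ s" if "drop k v = s" for v :: "'a list" using that by (metis append_take_drop_id)
  hence "(\<lambda>a. a @ s) ` take k ` {v\<in>A. drop k v = s} = {v\<in>A. drop k v = s}"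
    by (force simp: image_image)
  thus ?thesis by (simp add: bij_betw_def inj_on_def)
qed

lemma mat_apply_ampliate:
  assumes "finite A" "\<And>v. v \<in> A \<Longrightarrow> length v = k + m" "m \<le> length w"
  defines "s \<equiv> drop (length w - m) w"
  shows "mat_apply (ampliate m D) x A w
    = mat_apply D (\<lambda>a. x (a @ s)) (take k ` {v\<in>A. drop k v = s}) (take (length w - m) w)"
proof -
  have "mat_apply (ampliate m D) x A w = (\<Sum>v\<in>{v\<in>A. drop k v = s}. D (take (length w - m) w) (take k v) * x v)"
    unfolding mat_apply_def s_def
    by (rule sum.mono_neutral_cong_right) (use assms in \<open>auto simp: ampliate_def\<close>)
  also have "\<dots> = (\<Sum>a\<in>take k ` {v\<in>A. drop k v = s}. D (take (length w - m) w) a * x (a @ s))"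
    by (subst sum.reindex_bij_betw[OF bij_betw_append_suffix, symmetric]) (auto simp: assms(2) intro!: sum.cong)
  finally show ?thesis unfolding mat_apply_def .
qed

lemma ampliate_slice_bound:
  assumes D: "level_bound d D k c"
    and h: "finite A" "finite B" "A \<subseteq> words d" "B \<subseteq> words d" and len: "\<And>v. v \<in> A \<Longrightarrow> length v = k+m"
  shows "(\<Sum>w\<in>{w\<in>B. drop (length w - m) w = s}. (cmod (mat_apply (ampliate m D) x A w))\<^sup>2)
    \<le> c\<^sup>2 * (\<Sum>v\<in>{v\<in>A. drop k v = s}. (cmod (x v))\<^sup>2)"
proof (cases "length s = m")
  case False
  have "mat_apply (ampliate m D) x A w = 0" if "drop (length w - m) w = s" for w
  proof -
    have "\<not> m \<le> length w" using that False by auto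
    thus ?thesis unfolding mat_apply_def ampliate_def by simp
  qed
  thus ?thesis by (simp add: sum_nonneg)
next
  case True
  define Bs where "Bs = {w\<in>B. drop (length w - m) w = s}"
  define tk where "tk w = take (length w - m) w" for w :: "nat list"
  define A' where "A' = take k ` {v\<in>A. drop k v = s}"
  have mw: "m \<le> length w" if "w \<in> Bs" for w
  proof -
    have "length (drop (length w - m) w) = m" using that True unfolding Bs_def by simp
    thus ?thesis by simp
  qed
  have "(\<Sum>w\<in>Bs. (cmod (mat_apply (ampliate m D) x A w))\<^sup>2)
      = (\<Sum>w\<in>Bs. (cmod (mat_apply D (\<lambda>a. x (a @ s)) A' (tk w)))\<^sup>2)"
    using mw by (intro sum.cong) (auto simp: mat_apply_ampliate h len Bs_def A'_def tk_def)
  also have "\<dots> = (\<Sum>u\<in>tk ` Bs. (cmod (mat_apply D (\<lambda>a. x (a @ s)) A' u))\<^sup>2)"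
  proof -
    have "inj_on tk Bs" unfolding Bs_def tk_def
      by (rule inj_onI) (metis (mono_tags, lifting) append_take_drop_id mem_Collect_eq)
    thus ?thesis by (simp add: sum.reindex)
  qed
  also have "\<dots> \<le> c\<^sup>2 * (\<Sum>a\<in>A'. (cmod (x (a @ s)))\<^sup>2)"
    by (rule level_bound_squares[OF D])
      (use h len in \<open>auto simp: A'_def Bs_def tk_def intro: words_take\<close>)
  also have "(\<Sum>a\<in>A'. (cmod (x (a @ s)))\<^sup>2) = (\<Sum>v\<in>{v\<in>A. drop k v = s}. (cmod (x v))\<^sup>2)"
    unfolding A'_def by (rule sum.reindex_bij_betw[OF bij_betw_append_suffix])
  finally show ?thesis unfolding Bs_def .
qed

lemma level_bound_ampliate:
  assumes D: "level_bound d D k c"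
  shows "level_bound d (ampliate m D) (k+m) c"
proof (rule level_bound_of_squares)
  show "c \<ge> 0" using D unfolding level_bound_def by simp
  fix A B and x :: "nat list \<Rightarrow> complex"
  assume h: "finite A" "finite B" "A \<subseteq> words d" "B \<subseteq> words d" and len: "\<And>v. v \<in> A \<Longrightarrow> length v = k+m"
  let ?g = "\<lambda>w. drop (length w - m) w" and ?Q = "\<lambda>s. \<Sum>v\<in>{v\<in>A. drop k v = s}. (cmod (x v))\<^sup>2"
  have "(\<Sum>w\<in>B. (cmod (mat_apply (ampliate m D) x A w))\<^sup>2)
      = (\<Sum>s\<in>?g ` B. \<Sum>w\<in>{w\<in>B. ?g w = s}. (cmod (mat_apply (ampliate m D) x A w))\<^sup>2)"
    by (rule sum.group[symmetric]) (use h in auto)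
  also have "\<dots> \<le> (\<Sum>s\<in>?g ` B. c\<^sup>2 * ?Q s)"
    by (intro sum_mono ampliate_slice_bound[OF D h len])
  also have "\<dots> \<le> (\<Sum>s\<in>?g ` B \<union> drop k ` A. c\<^sup>2 * ?Q s)"
    by (rule sum_mono2) (use h in \<open>auto simp: sum_nonneg\<close>)
  also have "\<dots> = c\<^sup>2 * (\<Sum>v\<in>A. (cmod (x v))\<^sup>2)"
    unfolding sum_distrib_left[symmetric] by (subst sum.group) (use h in auto)
  finally show "(\<Sum>w\<in>B. (cmod (mat_apply (ampliate m D) x A w))\<^sup>2) \<le> c\<^sup>2 * (\<Sum>v\<in>A. (cmod (x v))\<^sup>2)" .
qed

section \<open>Elements of the *-algebra generated by the L_j\<close>

lemma infsum_single:
  assumes "\<And>t. t \<in> W \<Longrightarrow> t \<noteq> tz \<Longrightarrow> f t = 0"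
  shows "infsum f W = (if tz \<in> W then f tz else 0)"
proof -
  have "infsum f W = infsum f (W \<inter> {tz})"
    by (rule infsum_cong_neutral) (use assms in auto)
  also have "\<dots> = (if tz \<in> W then f tz else 0)" by (cases "tz \<in> W") auto
  finally show ?thesis .
qed

definition Lword :: "nat \<Rightarrow> nat list \<Rightarrow> mat" where
  "Lword d u = (\<lambda>w v. if v \<in> words d \<and> w = u @ v then 1 else 0)"

lemma Lword_Nil_in_star_alg: assumes "d \<ge> 1" shows "Lword d [] \<in> star_alg_L d"
proof -
  have "mat_mult d (adj (Lcr d 0)) (Lcr d 0) = Lword d []"
  proof (intro ext)
    fix w v
    have z: "(0::nat) < d" using assms by simp
    show "mat_mult d (adj (Lcr d 0)) (Lcr d 0) w v = Lword d [] w v"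
      unfolding mat_mult_def adj_def Lcr_def Lword_def
      by (subst infsum_single[where tz="0 # w"]) (auto simp: words_def z)
  qed
  moreover have "mat_mult d (adj (Lcr d 0)) (Lcr d 0) \<in> star_alg_L d"
    using assms by (intro star_alg_L.mult star_alg_L.adjoint star_alg_L.gen) auto
  ultimately show ?thesis by simp
qed

lemma Lcr_mult_Lword: assumes "u \<in> words d" "j < d" shows "mat_mult d (Lcr d j) (Lword d u) = Lword d (j # u)"
proof (intro ext)
  fix w v
  show "mat_mult d (Lcr d j) (Lword d u) w v = Lword d (j # u) w v"
    unfolding mat_mult_def Lcr_def Lword_def
    by (subst infsum_single[where tz="u @ v"]) (use assms in auto)
qed

lemma Lword_in_star_alg: assumes "d \<ge> 1" "u \<in> words d" shows "Lword d u \<in> star_alg_L d"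
  using assms(2)
proof (induction u)
  case Nil then show ?case using Lword_Nil_in_star_alg[OF assms(1)] by simp
next
  case (Cons j u)
  hence "u \<in> words d" "j < d" by (auto simp: words_def)
  with Cons show ?case by (metis Lcr_mult_Lword star_alg_L.gen star_alg_L.mult)
qed

definition Lshift :: "nat \<Rightarrow> nat list \<Rightarrow> nat list \<Rightarrow> mat" where
  "Lshift d u v = (\<lambda>w v'. if \<exists>t\<in>words d. w = u @ t \<and> v' = v @ t then 1 else 0)"

lemma Lword_mult_adj_Lword: "mat_mult d (Lword d u) (adj (Lword d v)) = Lshift d u v"
proof (intro ext)
  fix w v'
  show "mat_mult d (Lword d u) (adj (Lword d v)) w v' = Lshift d u v w v'"
    unfolding mat_mult_def adj_def Lshift_def Lword_def
    by (subst infsum_single[where tz="drop (length u) w"]) auto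
qed

lemma Lshift_in_star_alg: assumes "d \<ge> 1" "u \<in> words d" "v \<in> words d" shows "Lshift d u v \<in> star_alg_L d"
  using Lword_mult_adj_Lword[of d u v] Lword_in_star_alg[OF assms(1)] assms
  by (metis star_alg_L.adjoint star_alg_L.mult)

lemma zero_in_star_alg: assumes "d \<ge> 1" shows "(\<lambda>w v. 0) \<in> star_alg_L d"
proof -
  have "(\<lambda>w v. 0 * Lcr d 0 w v) \<in> star_alg_L d" using assms by (intro star_alg_L.scal star_alg_L.gen) auto
  thus ?thesis by simp
qed

lemma lincomb_in_star_alg: assumes "d \<ge> 1" "finite I" "\<And>i. i \<in> I \<Longrightarrow> M i \<in> star_alg_L d"
  shows "(\<lambda>w v. \<Sum>i\<in>I. c i * M i w v) \<in> star_alg_L d"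
  using assms(2,3)
proof (induction I rule: finite_induct)
  case empty then show ?case using zero_in_star_alg[OF assms(1)] by simp
next
  case (insert a I)
  have "(\<lambda>w v. c a * M a w v + (\<Sum>i\<in>I. c i * M i w v)) \<in> star_alg_L d"
    using insert by (intro star_alg_L.add star_alg_L.scal) auto
  thus ?case using insert by simp
qed

text \<open>L_u (I - \<Sum>_j L_j L_j^*) L_v^*, the matrix unit e_v \<mapsto> e_u.\<close>
definition munit :: "nat \<Rightarrow> nat list \<Rightarrow> nat list \<Rightarrow> mat" where
  "munit d u v = (\<lambda>w v'. Lshift d u v w v' + (\<Sum>j\<in>{..<d}. (-1) * Lshift d (u @ [j]) (v @ [j]) w v'))"

lemma munit_in_star_alg: assumes "d \<ge> 1" "u \<in> words d" "v \<in> words d" shows "munit d u v \<in> star_alg_L d"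
  unfolding munit_def
  by (intro star_alg_L.add lincomb_in_star_alg Lshift_in_star_alg assms) (use assms in \<open>auto simp: words_def\<close>)

lemma Lshift_eq_unit_plus_sum:
  assumes "u \<in> words d" "v \<in> words d"
  shows "Lshift d u v w v' = (if w = u \<and> v' = v then 1 else 0) + (\<Sum>j\<in>{..<d}. Lshift d (u @ [j]) (v @ [j]) w v')"
proof (cases "\<exists>t\<in>words d. w = u @ t \<and> v' = v @ t")
  case False
  hence "\<And>j. j < d \<Longrightarrow> Lshift d (u @ [j]) (v @ [j]) w v' = 0" unfolding Lshift_def
    by (auto simp: words_def)
  moreover have "\<not> (w = u \<and> v' = v)" using False by (force simp: words_def)
  ultimately show ?thesis using False unfolding Lshift_def by simp
next
  case True
  then obtain t where t: "t \<in> words d" "w = u @ t" "v' = v @ t" by auto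
  show ?thesis
  proof (cases t)
    case Nil
    hence "\<And>j. Lshift d (u @ [j]) (v @ [j]) w v' = 0" unfolding Lshift_def using t by auto
    then show ?thesis using t Nil unfolding Lshift_def by auto
  next
    case (Cons j0 t')
    have j0: "j0 < d" "t' \<in> words d" using t Cons by (auto simp: words_def)
    have "\<And>j. Lshift d (u @ [j]) (v @ [j]) w v' = (if j = j0 then 1 else 0)"
      unfolding Lshift_def using t Cons j0 by auto
    hence "(\<Sum>j\<in>{..<d}. Lshift d (u @ [j]) (v @ [j]) w v') = 1" using j0 by simp
    moreover have "\<not> (w = u \<and> v' = v)" using t Cons by auto
    ultimately show ?thesis using True unfolding Lshift_def by simp
  qed
qed

lemma munit_eq: assumes "u \<in> words d" "v \<in> words d"
  shows "munit d u v w v' = (if w = u \<and> v' = v then 1 else 0)"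
  unfolding munit_def using Lshift_eq_unit_plus_sum[OF assms, of w v'] by (simp add: sum_negf)

section \<open>The approximants\<close>

definition has_band :: "mat \<Rightarrow> nat \<Rightarrow> bool" where
  "has_band M b \<longleftrightarrow> (\<forall>w v. M w v \<noteq> 0 \<longrightarrow> length w \<le> length v + b \<and> length v \<le> length w + b)"

text \<open>T|F_k \<otimes> I: on F_(k+m) it applies T to the first k letters of the input and keeps the last m.\<close>
definition section_ampl :: "mat \<Rightarrow> nat \<Rightarrow> mat" where
  "section_ampl T k = (\<lambda>w v. ampliate (length v - k) (restr k T) w v)"

definition low_entries :: "nat \<Rightarrow> nat \<Rightarrow> nat \<Rightarrow> (nat list \<times> nat list) set" where
  "low_entries d b N = {(u,v0). u \<in> words d \<and> v0 \<in> words d \<and> length v0 < N \<and> length u \<le> length v0 + b}"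

definition top_entries :: "nat \<Rightarrow> nat \<Rightarrow> nat \<Rightarrow> (nat list \<times> nat list) set" where
  "top_entries d b N = {(u,v0). u \<in> words d \<and> v0 \<in> words d \<and> length v0 = N \<and> length u \<le> N + b}"

lemma finite_low_entries: "finite (low_entries d b N)"
  by (rule finite_subset[of _ "{u \<in> words d. length u \<le> N+b} \<times> {u \<in> words d. length u \<le> N}"])
    (use finite_words_le[of d] in \<open>auto simp: low_entries_def\<close>)

lemma finite_top_entries: "finite (top_entries d b N)"
  by (rule finite_subset[of _ "{u \<in> words d. length u \<le> N+b} \<times> {u \<in> words d. length u \<le> N}"])
    (use finite_words_le[of d] in \<open>auto simp: top_entries_def\<close>)

lemma Lshift_support_iff:
  assumes "length v0 = N" "w \<in> words d" "v' \<in> words d"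
  shows "(\<exists>t\<in>words d. w = u @ t \<and> v' = v0 @ t) \<longleftrightarrow>
    (N \<le> length v' \<and> length v' - N \<le> length w \<and> drop (length w - (length v' - N)) w = drop N v'
     \<and> (u, v0) = (take (length w - (length v' - N)) w, take N v'))" (is "?L \<longleftrightarrow> ?R")
proof
  assume ?L
  then obtain t where t: "w = u @ t" "v' = v0 @ t" by auto
  thus ?R using assms(1) by auto
next
  assume h: ?R
  show ?L
  proof (intro bexI conjI)
    show "drop N v' \<in> words d" using assms(3) by (rule words_drop)
    show "w = u @ drop N v'" using h by (metis append_take_drop_id prod.inject)
    show "v' = v0 @ drop N v'" using h by simp
  qed
qed

text \<open>The operator S_N; the band width b makes both index sets finite.\<close>
definition approximant :: "nat \<Rightarrow> mat \<Rightarrow> nat \<Rightarrow> nat \<Rightarrow> mat" where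
  "approximant d T b N = (\<lambda>w v'. (\<Sum>p\<in>low_entries d b N. T (fst p) (snd p) * munit d (fst p) (snd p) w v')
      + (\<Sum>p\<in>top_entries d b N. T (fst p) (snd p) * Lshift d (fst p) (snd p) w v'))"

lemma approximant_in_star_alg: assumes "d \<ge> 1" shows "approximant d T b N \<in> star_alg_L d"
  unfolding approximant_def
  by (intro star_alg_L.add lincomb_in_star_alg munit_in_star_alg Lshift_in_star_alg assms
      finite_low_entries finite_top_entries) (auto simp: low_entries_def top_entries_def)

lemma sum_low_entries_munit:
  assumes band: "has_band T b" and w: "w \<in> words d" and v: "v' \<in> words d"
  shows "(\<Sum>p\<in>low_entries d b N. T (fst p) (snd p) * munit d (fst p) (snd p) w v')
    = (if length v' < N then T w v' else 0)"
proof -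
  have "(\<Sum>p\<in>low_entries d b N. T (fst p) (snd p) * munit d (fst p) (snd p) w v') =
        (\<Sum>p\<in>low_entries d b N. if p = (w, v') then T (fst p) (snd p) else 0)"
    by (rule sum.cong) (auto simp: munit_eq low_entries_def split: if_splits)
  also have "\<dots> = (if (w, v') \<in> low_entries d b N then T w v' else 0)" using finite_low_entries by simp
  also have "\<dots> = (if length v' < N then T w v' else 0)"
    using band w v unfolding has_band_def low_entries_def by auto
  finally show ?thesis .
qed

lemma sum_top_entries_Lshift:
  assumes band: "has_band T b" and w: "w \<in> words d" and v: "v' \<in> words d"
  shows "(\<Sum>p\<in>top_entries d b N. T (fst p) (snd p) * Lshift d (fst p) (snd p) w v')
    = (if length v' < N then 0 else section_ampl T N w v')"
proof -
  define m where "m = length v' - N"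
  define i0 where "i0 = (take (length w - m) w, take N v')"
  define cnd where "cnd = (N \<le> length v' \<and> m \<le> length w \<and> drop (length w - m) w = drop N v')"
  have "(\<Sum>p\<in>top_entries d b N. T (fst p) (snd p) * Lshift d (fst p) (snd p) w v') =
        (\<Sum>p\<in>top_entries d b N. if p = i0 then (if cnd then T (fst p) (snd p) else 0) else 0)"
  proof (rule sum.cong)
    fix p assume "p \<in> top_entries d b N"
    then obtain u v0 where p: "p = (u, v0)" "length v0 = N" unfolding top_entries_def by auto
    have "(\<exists>t\<in>words d. w = u @ t \<and> v' = v0 @ t) \<longleftrightarrow> ((u,v0) = i0 \<and> cnd)"
      using Lshift_support_iff[OF p(2) w v, of u] unfolding i0_def cnd_def m_def by blast
    hence "Lshift d u v0 w v' = (if (u,v0) = i0 \<and> cnd then 1 else 0)" unfolding Lshift_def by simp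
    thus "T (fst p) (snd p) * Lshift d (fst p) (snd p) w v' = (if p = i0 then (if cnd then T (fst p) (snd p) else 0) else 0)"
      unfolding p by (cases i0) auto
  qed simp
  also have "\<dots> = (if i0 \<in> top_entries d b N then (if cnd then T (fst i0) (snd i0) else 0) else 0)"
    using finite_top_entries by simp
  also have "\<dots> = (if cnd then T (fst i0) (snd i0) else 0)"
  proof (cases cnd)
    case True
    have "fst i0 \<in> words d" "snd i0 \<in> words d" "length (snd i0) = N"
      using True w v unfolding i0_def cnd_def by (auto intro: words_take)
    hence "T (fst i0) (snd i0) = 0" if "i0 \<notin> top_entries d b N"
      using that band unfolding top_entries_def has_band_def by (auto simp: case_prod_beta)
    then show ?thesis by auto
  qed simp
  also have "\<dots> = (if length v' < N then 0 else section_ampl T N w v')"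
    unfolding section_ampl_def ampliate_def restr_def cnd_def i0_def m_def by auto
  finally show ?thesis .
qed

lemma approximant_eq:
  assumes "has_band T b" "w \<in> words d" "v' \<in> words d"
  shows "approximant d T b N w v' = (if length v' < N then T w v' else section_ampl T N w v')"
  unfolding approximant_def sum_low_entries_munit[OF assms] sum_top_entries_Lshift[OF assms] by simp

section \<open>Telescoping the approximation error\<close>

text \<open>defect T k is D_k = (T - T|F_k \<otimes> I)|F_(k+1), the increment of section_ampl T k in k.\<close>
definition defect :: "mat \<Rightarrow> nat \<Rightarrow> mat" where
  "defect T k = (\<lambda>w v. if length v = k+1 then T w v - (if w \<noteq> [] \<and> last w = last v then T (butlast w) (butlast v) else 0) else 0)"

lemma suffix_step_iff:
  fixes w v :: "nat list"
  assumes "k < length v" "m = length v - k - 1"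
  shows "(m+1 \<le> length w \<and> drop (length w - m - 1) w = drop k v) \<longleftrightarrow>
    (m \<le> length w \<and> drop (length w - m) w = drop (k+1) v \<and> take (length w - m) w \<noteq> []
      \<and> last (take (length w - m) w) = last (take (k+1) v))" (is "?L \<longleftrightarrow> ?R")
proof
  assume h: ?L
  define i where "i = length w - m - 1"
  have i: "i < length w" "length w - m = Suc i" using h unfolding i_def by auto
  have dw: "drop i w = w ! i # drop (Suc i) w" using i by (simp add: Cons_nth_drop_Suc)
  have dv: "drop k v = v ! k # drop (Suc k) v" using assms by (simp add: Cons_nth_drop_Suc)
  have "w ! i = v ! k" "drop (Suc i) w = drop (Suc k) v" using h dw dv unfolding i_def by auto
  moreover have "last (take (Suc i) w) = w ! i" using i by (simp add: take_Suc_conv_app_nth)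
  moreover have "last (take (Suc k) v) = v ! k" using assms by (simp add: take_Suc_conv_app_nth)
  ultimately show ?R using i h by auto
next
  assume h: ?R
  define i where "i = length w - m - 1"
  have i: "i < length w" "length w - m = Suc i" using h unfolding i_def by auto
  have dw: "drop i w = w ! i # drop (Suc i) w" using i by (simp add: Cons_nth_drop_Suc)
  have dv: "drop k v = v ! k # drop (Suc k) v" using assms by (simp add: Cons_nth_drop_Suc)
  have "last (take (Suc i) w) = w ! i" using i by (simp add: take_Suc_conv_app_nth)
  moreover have "last (take (Suc k) v) = v ! k" using assms by (simp add: take_Suc_conv_app_nth)
  ultimately have "w ! i = v ! k" using h i by simp
  thus ?L using h i dw dv unfolding i_def by auto
qed

lemma section_ampl_top: "length v = n \<Longrightarrow> section_ampl T n w v = T w v"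
  unfolding section_ampl_def ampliate_def restr_def by simp

lemma section_ampl_eq:
  assumes "k \<le> length v"
  defines "m \<equiv> length v - k"
  shows "section_ampl T k w v = (if m \<le> length w \<and> drop (length w - m) w = drop k v
    then T (take (length w - m) w) (take k v) else 0)"
  using assms unfolding section_ampl_def ampliate_def restr_def by (auto simp del: drop_drop)

lemma section_ampl_step:
  assumes k: "k < length v"
  shows "section_ampl T (Suc k) w v - section_ampl T k w v = ampliate (length v - k - 1) (defect T k) w v"
proof -
  define m where "m = length v - k - 1"
  have U1: "section_ampl T (Suc k) w v = (if m \<le> length w \<and> drop (length w - m) w = drop (k+1) v
      then T (take (length w - m) w) (take (Suc k) v) else 0)"
    using section_ampl_eq[of "Suc k" v T w] k unfolding m_def by simp
  have U0: "section_ampl T k w v = (if m+1 \<le> length w \<and> drop (length w - m - 1) w = drop k v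
      then T (take (length w - m - 1) w) (take k v) else 0)"
    using section_ampl_eq[of k v T w] k unfolding m_def by (simp add: Suc_diff_Suc)
  have TD: "ampliate m (defect T k) w v = (if m \<le> length w \<and> drop (length w - m) w = drop (k+1) v
      then T (take (length w - m) w) (take (Suc k) v) -
        (if take (length w - m) w \<noteq> [] \<and> last (take (length w - m) w) = last (take (k+1) v)
         then T (butlast (take (length w - m) w)) (butlast (take (Suc k) v)) else 0) else 0)"
    using k unfolding ampliate_def defect_def m_def by (auto simp del: drop_drop)
  have bt: "butlast (take (length w - m) w) = take (length w - m - 1) w" "butlast (take (Suc k) v) = take k v"
    using k by (simp_all add: butlast_take)
  show ?thesis unfolding m_def[symmetric] U1 U0 TD bt using suffix_step_iff[OF k m_def, of w] by auto
qed

lemma minus_section_ampl_telescope: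
  assumes "N \<le> length v"
  shows "T w v - section_ampl T N w v = (\<Sum>k\<in>{N..<length v}. ampliate (length v - k - 1) (defect T k) w v)"
proof -
  have "(\<Sum>k\<in>{N..<length v}. ampliate (length v - k - 1) (defect T k) w v) = (\<Sum>k = N..<length v. section_ampl T (Suc k) w v - section_ampl T k w v)"
    by (rule sum.cong) (auto simp: section_ampl_step)
  also have "\<dots> = section_ampl T (length v) w v - section_ampl T N w v" by (rule sum_Suc_diff'[OF assms])
  finally show ?thesis by (simp add: section_ampl_top)
qed

lemma approximant_error_level_bound:
  assumes band: "has_band T b"
    and defect_bound: "\<And>k. k \<ge> N \<Longrightarrow> level_bound d (defect T k) (Suc k) (c k)"
  shows "level_bound d (\<lambda>w v. T w v - approximant d T b N w v) n (\<Sum>k\<in>{N..<n}. c k)"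
proof -
  define E where "E = (\<lambda>w v. \<Sum>k\<in>{N..<n}. ampliate (n - k - 1) (defect T k) w v)"
  have "level_bound d E n (\<Sum>k\<in>{N..<n}. c k)" unfolding E_def
  proof (rule level_bound_sum)
    fix k assume k: "k \<in> {N..<n}"
    have "level_bound d (ampliate (n - k - 1) (defect T k)) (Suc k + (n - k - 1)) (c k)"
      using k by (intro level_bound_ampliate defect_bound) auto
    moreover have "Suc k + (n - k - 1) = n" using k by auto
    ultimately show "level_bound d (ampliate (n - k - 1) (defect T k)) n (c k)" by simp
  qed simp
  thus ?thesis
  proof (rule level_bound_cong)
    fix w v assume w: "w \<in> words d" and v: "v \<in> words d" and n: "length v = n"
    show "E w v = T w v - approximant d T b N w v"
      using approximant_eq[OF band w v, of N] minus_section_ampl_telescope[of N v T w] n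
      unfolding E_def by (cases "n < N") auto
  qed
qed

lemma approximant_error_band:
  assumes band: "has_band T b"
    and w: "w \<in> words d" and v: "v \<in> words d"
    and nz: "T w v - approximant d T b N w v \<noteq> 0"
  shows "length w \<le> length v + b \<and> length v \<le> length w + b"
proof (cases "length v < N \<or> T w v \<noteq> 0")
  case True
  then show ?thesis using nz band approximant_eq[OF band w v, of N]
    unfolding has_band_def by auto
next
  case False
  define m where "m = length v - N"
  have "section_ampl T N w v \<noteq> 0" using False nz approximant_eq[OF band w v, of N] by auto
  hence c1: "m \<le> length w" and t: "T (take (length w - m) w) (take N v) \<noteq> 0"
    using False unfolding section_ampl_def ampliate_def restr_def m_def by (auto split: if_splits)
  have "length (take (length w - m) w) \<le> length (take N v) + b
      \<and> length (take N v) \<le> length (take (length w - m) w) + b"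
    using band t unfolding has_band_def by blast
  thus ?thesis using False c1 unfolding m_def by auto
qed

lemma cstar_L_if_summable_defects:
  assumes d: "d \<ge> 1" and Tb: "bounded_op d T" and band: "has_band T b"
    and cs: "summable c" and cnn: "\<And>k. c k \<ge> 0"
    and defect_bound: "\<And>k. k \<ge> k\<^sub>0 \<Longrightarrow> level_bound d (defect T k) (Suc k) (c k)"
  shows "T \<in> cstar_L d"
  unfolding cstar_L_def
proof (intro CollectI conjI Tb allI impI)
  fix e :: real assume e: "e > 0"
  define K where "K = sqrt (real (2*b+1))"
  have K: "K \<ge> 1" unfolding K_def by simp
  obtain N' where N': "\<And>n. n \<ge> N' \<Longrightarrow> norm (\<Sum>i. c (i + n)) < e / K"
    using suminf_exist_split[OF _ cs, of "e / K"] e K by auto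
  define N where "N = max k\<^sub>0 N'"
  define \<delta> where "\<delta> = (\<Sum>i. c (i + N))"
  have cs': "summable (\<lambda>i. c (i + N))" by (rule summable_ignore_initial_segment[OF cs])
  have \<delta>0: "\<delta> \<ge> 0" unfolding \<delta>_def by (rule suminf_nonneg[OF cs']) (rule cnn)
  have \<delta>e: "\<delta> < e / K" using N'[of N] \<delta>0 unfolding \<delta>_def N_def by auto
  have tail: "(\<Sum>k\<in>{N..<n}. c k) \<le> \<delta>" for n
  proof (cases "N \<le> n")
    case True
    have "(\<Sum>k\<in>{N..<n}. c k) = (\<Sum>i<n-N. c (i + N))"
      using sum.shift_bounds_nat_ivl[of c 0 N "n-N"] True by (simp add: atLeast0LessThan)
    also have "\<dots> \<le> \<delta>" unfolding \<delta>_def by (rule sum_le_suminf[OF cs']) (auto simp: cnn)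
    finally show ?thesis .
  qed (use \<delta>0 in simp)
  have "level_bound d (\<lambda>w v. T w v - approximant d T b N w v) n \<delta>" for n
    using approximant_error_level_bound[OF band, where N = N and c = c and n = n] defect_bound tail
    by (auto simp: N_def intro: level_bound_mono)
  hence "op_bound d (\<lambda>w v. T w v - approximant d T b N w v) (K * \<delta>)"
    unfolding K_def using approximant_error_band[OF band] \<delta>0
    by (intro op_bound_of_band_level_bound) auto
  hence "opnorm d (\<lambda>w v. T w v - approximant d T b N w v) \<le> K * \<delta>" by (rule opnorm_le)
  also have "K * \<delta> < e" using \<delta>e K by (simp add: pos_less_divide_eq mult.commute)
  finally show "\<exists>S\<in>star_alg_L d. opnorm d (\<lambda>w v. T w v - S w v) < e"
    using approximant_in_star_alg[OF d] by blast
qed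

section \<open>Defects as commutators with the right creation operators\<close>

text \<open>strip_in M j = M R_j^* and strip_out M j = R_j M.\<close>
definition strip_in :: "mat \<Rightarrow> nat \<Rightarrow> mat" where
  "strip_in M j = (\<lambda>w v. if v \<noteq> [] \<and> last v = j then M w (butlast v) else 0)"

definition strip_out :: "mat \<Rightarrow> nat \<Rightarrow> mat" where
  "strip_out M j = (\<lambda>w v. if w \<noteq> [] \<and> last w = j then M (butlast w) v else 0)"

lemma level_bound_strip_in:
  assumes M: "level_bound d M k c" shows "level_bound d (strip_in M j) (Suc k) c"
  unfolding level_bound_def
proof (intro conjI allI impI)
  show "c \<ge> 0" using M unfolding level_bound_def by simp
  fix A B x assume h: "finite A" "finite B" "A \<subseteq> words d" "B \<subseteq> words d" "\<forall>v\<in>A. length v = Suc k"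
  define Aj where "Aj = {v\<in>A. v \<noteq> [] \<and> last v = j}"
  define A' where "A' = butlast ` Aj"
  have "v = butlast v @ [j]" if "v \<in> Aj" for v
    using that unfolding Aj_def by (metis (mono_tags) append_butlast_last_id mem_Collect_eq)
  hence "(\<lambda>a. a @ [j]) ` A' = Aj" unfolding A'_def by (force simp: image_image)
  hence bij: "bij_betw (\<lambda>a. a @ [j]) A' Aj" by (simp add: bij_betw_def inj_on_def)
  have eq: "mat_apply (strip_in M j) x A = mat_apply M (\<lambda>a. x (a @ [j])) A'"
  proof
    fix w
    have "mat_apply (strip_in M j) x A w = (\<Sum>v\<in>Aj. M w (butlast v) * x v)"
      unfolding mat_apply_def strip_in_def Aj_def using h(1)
      by (simp add: if_distrib[of "\<lambda>z. z * _"] sum.inter_filter[symmetric] cong: if_cong)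
    also have "\<dots> = (\<Sum>a\<in>A'. M w a * x (a @ [j]))"
      by (subst sum.reindex_bij_betw[OF bij, symmetric]) simp
    finally show "mat_apply (strip_in M j) x A w = mat_apply M (\<lambda>a. x (a @ [j])) A' w" unfolding mat_apply_def .
  qed
  have "l2_on (mat_apply M (\<lambda>a. x (a @ [j])) A') B \<le> c * l2_on (\<lambda>a. x (a @ [j])) A'"
  proof (rule level_boundD[OF M])
    show "finite A'" unfolding A'_def Aj_def using h by simp
    show "A' \<subseteq> words d" unfolding A'_def Aj_def using h(3) by (auto intro: words_butlast)
    show "\<And>v. v \<in> A' \<Longrightarrow> length v = k" unfolding A'_def Aj_def using h(5) by auto
  qed (use h in auto)
  also have "l2_on (\<lambda>a. x (a @ [j])) A' \<le> l2_on x A"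
    by (rule l2_on_inj_le[OF h(1)]) (use bij in \<open>auto simp: bij_betw_def Aj_def\<close>)
  finally show "l2_on (mat_apply (strip_in M j) x A) B \<le> c * l2_on x A"
    unfolding eq using \<open>c \<ge> 0\<close> by (meson mult_left_mono order_trans)
qed

lemma level_bound_strip_out:
  assumes M: "level_bound d M n c" shows "level_bound d (strip_out M j) n c"
  unfolding level_bound_def
proof (intro conjI allI impI)
  show "c \<ge> 0" using M unfolding level_bound_def by simp
  fix A B x assume h: "finite A" "finite B" "A \<subseteq> words d" "B \<subseteq> words d" "\<forall>v\<in>A. length v = n"
  define Bj where "Bj = {w\<in>B. w \<noteq> [] \<and> last w = j}"
  have eq: "mat_apply (strip_out M j) x A = (\<lambda>w. if w \<noteq> [] \<and> last w = j then mat_apply M x A (butlast w) else 0)"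
    unfolding mat_apply_def strip_out_def by (auto simp: fun_eq_iff)
  have "l2_on (mat_apply (strip_out M j) x A) B = l2_on (\<lambda>w. mat_apply M x A (butlast w)) Bj"
    unfolding eq Bj_def by (rule l2_on_if[OF h(2)])
  also have "\<dots> = l2_on (mat_apply M x A) (butlast ` Bj)"
  proof (rule l2_on_reindex)
    show "inj_on butlast Bj" unfolding Bj_def inj_on_def by (metis (mono_tags, lifting) append_butlast_last_id mem_Collect_eq)
  qed
  also have "\<dots> \<le> c * l2_on x A"
    by (rule level_boundD[OF M]) (use h in \<open>auto simp: Bj_def intro: words_butlast\<close>)
  finally show "l2_on (mat_apply (strip_out M j) x A) B \<le> c * l2_on x A" .
qed

lemma commutator_Rcr_eq:
  assumes "w \<in> words d" "a \<in> words d" "j < d"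
  shows "commutator d T (Rcr d j) w a = T w (a @ [j]) - (if w \<noteq> [] \<and> last w = j then T (butlast w) a else 0)"
proof -
  have 1: "mat_mult d T (Rcr d j) w a = T w (a @ [j])"
    unfolding mat_mult_def Rcr_def
    by (subst infsum_single[where tz="a @ [j]"]) (use assms in \<open>auto simp: words_def\<close>)
  have 2: "mat_mult d (Rcr d j) T w a = (if w \<noteq> [] \<and> last w = j then T (butlast w) a else 0)"
  proof (cases "w \<noteq> [] \<and> last w = j")
    case True
    have bw: "butlast w \<in> words d" using assms(1) by (rule words_butlast)
    have "w = butlast w @ [j]" using True by (metis append_butlast_last_id)
    then show ?thesis unfolding mat_mult_def Rcr_def using True bw
      by (subst infsum_single[where tz="butlast w"]) (auto, metis butlast_snoc)
  next
    case False
    then show ?thesis unfolding mat_mult_def Rcr_def by (subst infsum_0) auto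
  qed
  show ?thesis unfolding commutator_def 1 2 ..
qed

lemma commutator_adj_Rcr_eq:
  assumes "u \<in> words d" "v \<in> words d" "j < d"
  shows "commutator d T (adj (Rcr d j)) u v = (if v \<noteq> [] \<and> last v = j then T u (butlast v) else 0) - T (u @ [j]) v"
proof -
  have 1: "mat_mult d T (adj (Rcr d j)) u v = (if v \<noteq> [] \<and> last v = j then T u (butlast v) else 0)"
  proof (cases "v \<noteq> [] \<and> last v = j")
    case True
    have bv: "butlast v \<in> words d" using assms(2) by (rule words_butlast)
    have "v = butlast v @ [j]" using True by (metis append_butlast_last_id)
    then show ?thesis unfolding mat_mult_def Rcr_def adj_def using True bv
      by (subst infsum_single[where tz="butlast v"]) (auto, metis butlast_snoc)
  next
    case False
    then show ?thesis unfolding mat_mult_def Rcr_def adj_def by (subst infsum_0) auto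
  qed
  have 2: "mat_mult d (adj (Rcr d j)) T u v = T (u @ [j]) v"
    unfolding mat_mult_def Rcr_def adj_def
    by (subst infsum_single[where tz="u @ [j]"]) (use assms in \<open>auto simp: words_def\<close>)
  show ?thesis unfolding commutator_def 1 2 ..
qed

lemma defect_eq_commutator_Rcr:
  assumes "w \<in> words d" "v \<in> words d" "length v = Suc k"
  shows "defect T k w v = (\<Sum>j\<in>{..<d}. strip_in (commutator d T (Rcr d j)) j w v)"
proof -
  have ne: "v \<noteq> []" using assms by auto
  have bv: "butlast v \<in> words d" using assms(2) by (rule words_butlast)
  have "(\<Sum>j\<in>{..<d}. strip_in (commutator d T (Rcr d j)) j w v) =
        (\<Sum>j\<in>{..<d}. if j = last v then commutator d T (Rcr d j) w (butlast v) else 0)"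
    by (rule sum.cong) (auto simp: strip_in_def ne)
  also have "\<dots> = commutator d T (Rcr d (last v)) w (butlast v)"
    using last_less_if_words[OF assms(2) ne] by simp
  also have "\<dots> = T w v - (if w \<noteq> [] \<and> last w = last v then T (butlast w) (butlast v) else 0)"
    using commutator_Rcr_eq[OF assms(1) bv last_less_if_words[OF assms(2) ne], of T] ne by (simp add: append_butlast_last_id)
  finally show ?thesis unfolding defect_def using assms(3) by simp
qed

lemma defect_eq_commutator_adj_Rcr:
  assumes "w \<in> words d" "v \<in> words d" "length v = Suc k" "has_band T b" "b < Suc k"
  shows "defect T k w v = (\<Sum>j\<in>{..<d}. (-1) * strip_out (commutator d T (adj (Rcr d j))) j w v)"
proof (cases "w = []")
  case True
  have "T w v = 0" using assms True unfolding has_band_def by fastforce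
  then show ?thesis unfolding defect_def strip_out_def using True assms(3) by simp
next
  case False
  have bw: "butlast w \<in> words d" using assms(1) by (rule words_butlast)
  have "(\<Sum>j\<in>{..<d}. (-1) * strip_out (commutator d T (adj (Rcr d j))) j w v) =
        (\<Sum>j\<in>{..<d}. if j = last w then - commutator d T (adj (Rcr d j)) (butlast w) v else 0)"
    by (rule sum.cong) (auto simp: strip_out_def False)
  also have "\<dots> = - commutator d T (adj (Rcr d (last w))) (butlast w) v"
    using last_less_if_words[OF assms(1) False] by simp
  also have "\<dots> = T w v - (if w \<noteq> [] \<and> last w = last v then T (butlast w) (butlast v) else 0)"
    using commutator_adj_Rcr_eq[OF bw assms(2) last_less_if_words[OF assms(1) False], of T] False assms(3)
    by (cases v rule: rev_cases, auto simp: append_butlast_last_id)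
  finally show ?thesis unfolding defect_def using assms(3) by simp
qed

lemma cstar_L_if_summable_commutators_Rcr:
  assumes d: "d \<ge> 1" and T: "band_limited d T"
    and summ: "\<And>j. j < d \<Longrightarrow> summable_op d (commutator d T (Rcr d j))"
  shows "T \<in> cstar_L d"
proof -
  define C where "C j = commutator d T (Rcr d j)" for j
  have Cb: "bounded_op d (C j)" and Cs: "summable (\<lambda>n. opnorm d (restr n (C j)))" if "j < d" for j
    using summ[OF that] unfolding C_def summable_op_def band_limited_def by simp_all
  obtain b where band: "has_band T b" using T unfolding band_limited_def has_band_def by blast
  define c where "c k = (\<Sum>j<d. opnorm d (restr k (C j)))" for k
  show ?thesis
  proof (rule cstar_L_if_summable_defects[OF d _ band, where k\<^sub>0 = 0])
    show "bounded_op d T" using T unfolding band_limited_def by simp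
    show "summable c" unfolding c_def by (rule summable_sum) (use Cs in auto)
    show "\<And>k. c k \<ge> 0" unfolding c_def by (intro sum_nonneg opnorm_nonneg bounded_op_restr Cb) simp
    fix k :: nat
    have "level_bound d (\<lambda>w v. \<Sum>j<d. strip_in (C j) j w v) (Suc k) (c k)"
      unfolding c_def by (intro level_bound_sum level_bound_strip_in level_bound_restr Cb) auto
    thus "level_bound d (defect T k) (Suc k) (c k)"
      by (rule level_bound_cong) (use defect_eq_commutator_Rcr in \<open>auto simp: C_def\<close>)
  qed
qed

lemma cstar_L_if_summable_commutators_adj_Rcr:
  assumes d: "d \<ge> 1" and T: "band_limited d T"
    and summ: "\<And>j. j < d \<Longrightarrow> summable_op d (commutator d T (adj (Rcr d j)))"
  shows "T \<in> cstar_L d"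
proof -
  define G where "G j = commutator d T (adj (Rcr d j))" for j
  have Gb: "bounded_op d (G j)" and Gs: "summable (\<lambda>n. opnorm d (restr n (G j)))" if "j < d" for j
    using summ[OF that] unfolding G_def summable_op_def band_limited_def by simp_all
  obtain b where band: "has_band T b" using T unfolding band_limited_def has_band_def by blast
  define c where "c k = (\<Sum>j<d. opnorm d (restr (Suc k) (G j)))" for k
  show ?thesis
  proof (rule cstar_L_if_summable_defects[OF d _ band, where k\<^sub>0 = b])
    show "bounded_op d T" using T unfolding band_limited_def by simp
    show "summable c" unfolding c_def
    proof (rule summable_sum)
      fix j assume "j \<in> {..<d}"
      hence "summable (\<lambda>n. opnorm d (restr (n + 1) (G j)))"
        by (intro summable_ignore_initial_segment Gs) simp
      thus "summable (\<lambda>k. opnorm d (restr (Suc k) (G j)))" by simp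
    qed
    show "\<And>k. c k \<ge> 0" unfolding c_def by (intro sum_nonneg opnorm_nonneg bounded_op_restr Gb) simp
    fix k assume k: "k \<ge> b"
    have "level_bound d (\<lambda>w v. \<Sum>j<d. (-1) * strip_out (G j) j w v) (Suc k)
        (\<Sum>j<d. cmod (-1) * opnorm d (restr (Suc k) (G j)))"
      by (intro level_bound_sum level_bound_scal level_bound_strip_out level_bound_restr Gb) auto
    hence "level_bound d (\<lambda>w v. \<Sum>j<d. (-1) * strip_out (G j) j w v) (Suc k) (c k)"
      unfolding c_def by simp
    thus "level_bound d (defect T k) (Suc k) (c k)"
      by (rule level_bound_cong) (use defect_eq_commutator_adj_Rcr[OF _ _ _ band] k in \<open>auto simp: G_def\<close>)
  qed
qed

theorem theorem3p8:
  fixes d :: nat and T :: mat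
  assumes "d \<ge> 2"
    and "band_limited d T"
    and "(\<forall>j<d. summable_op d (commutator d T (adj (Rcr d j))))
         \<or> (\<forall>j<d. summable_op d (commutator d T (Rcr d j)))"
  shows "T \<in> cstar_L d"
proof -
  have "d \<ge> 1" using assms(1) by simp
  with assms(2,3) show ?thesis
    using cstar_L_if_summable_commutators_adj_Rcr cstar_L_if_summable_commutators_Rcr by blast
qed

end
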